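(* In the setting described in the context (the random experiment for SA2), for every service $i\in S$ and every node $j\in V$, $\Pr(j\in X^\tau_i)\ge\delta\,(1-\exp(-x_{ij}))$.
   Context: An SPSC instance: finite sets $S$ (services), $V$ (nodes), $U$ (users); sizes $s_i>0$; capacities $c_j>0$; for each user $k$ a service $i_k\in S$, a set $T_k\subseteq V$, a reward $w_k>0$. Let $\{x_{ij}\},\{y_k\}$ be an optimal solution of the LP with nonnegative variables: maximize $\sum_ky_kw_k$ s.t. $y_k\le\sum_{j\in T_k}x_{i_kj}$, $y_k\le1$; $\sum_ix_{ij}s_i\le c_j$; $x_{ij}=0$ if $s_i>c_j$; $0\le x_{ij}\le1$. Let $\beta:=1/4,\gamma:=1/2,\delta:=1/4$, $\mathbb N=\{1,2,\dots\}$. For $j\in V$: $P_j^\oplus:=\{i:c_j/2<s_i\le c_j\}$, $P_j^\ominus:=\{i:c_j/4<s_i\le c_j/2\}$, $P_j^q:=\{i:\gamma^qc_j\beta<s_i\le\gamma^{q-1}c_j\beta\}$ ($q\in\mathbb N$); $d_j^q:=\sum_{i\in P_j^q}x_{ij}$ for $q\in\mathbb N\cup\{\oplus,\ominus\}$; $v_j:=\delta c_j/\sum_{i:s_i\le c_j\beta}s_ix_{ij}$; $n_j^q:=\lceil v_jd_j^q\rceil$; $h_j:=d_j^\ominus$ if $d_j^\ominus<2$, else $d_j^\ominus/2$. A construction map $\zeta:V\to\{1,2,3\}$ has slot set $\Lambda(\zeta)$ (slot $\sigma$ has node $\nu(\sigma)$, class $\kappa(\sigma)$): for each $j$, one slot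 of class $\oplus$ if $\zeta(j)=1$; two slots of class $\ominus$ if $\zeta(j)=2$; for each $q\in\mathbb N$, $n_j^q$ slots of class $q$ if $\zeta(j)=3$; no other slots on $j$. A slot allocation of $\Lambda$ is $\tau:\Lambda\to S$ with $\tau(\sigma)\in P^{\kappa(\sigma)}_{\nu(\sigma)}$; $X^\tau_i:=\{j:\exists\sigma\in\Lambda,\nu(\sigma)=j,\tau(\sigma)=i\}$. Random experiment: $\zeta(j)$ independent over $j$, equal to $1,2,3$ with probabilities $\delta d_j^\oplus,\ \delta h_j,\ 1-\delta d_j^\oplus-\delta h_j$; given $\zeta$, each slot $\sigma\in\Lambda(\zeta)$ independently gets $\tau(\sigma)=i$ with probability $x_{i\nu(\sigma)}/d^{\kappa(\sigma)}_{\nu(\sigma)}$, $i\in P^{\kappa(\sigma)}_{\nu(\sigma)}$. *)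

theory Defs
  imports "HOL-Probability.Probability"
begin

definition beta_c :: real where "beta_c = 1/4"
definition gamma_c :: real where "gamma_c = 1/2"
definition delta_c :: real where "delta_c = 1/4"

text \<open>Classes of slots: oplus, ominus, and q for q in N (q >= 1).\<close>
datatype cls = Plus | Minus | Q nat

text \<open>Feasibility and optimality of the LP relaxation.
  S services, V nodes, U users, s sizes, c capacities,
  svc k = i_k, T k = T_k, w k = w_k.\<close>
definition lp_feasible ::
  "'s set \<Rightarrow> 'v set \<Rightarrow> 'u set \<Rightarrow> ('s \<Rightarrow> real) \<Rightarrow> ('v \<Rightarrow> real) \<Rightarrow>
   ('u \<Rightarrow> 's) \<Rightarrow> ('u \<Rightarrow> 'v set) \<Rightarrow> ('s \<Rightarrow> 'v \<Rightarrow> real) \<Rightarrow> ('u \<Rightarrow> real) \<Rightarrow> bool" where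
  "lp_feasible S V U s c svc T x y \<longleftrightarrow>
     (\<forall>k\<in>U. 0 \<le> y k \<and> y k \<le> (\<Sum>j\<in>T k. x (svc k) j) \<and> y k \<le> 1) \<and>
     (\<forall>j\<in>V. (\<Sum>i\<in>S. x i j * s i) \<le> c j) \<and>
     (\<forall>i\<in>S. \<forall>j\<in>V. 0 \<le> x i j \<and> x i j \<le> 1 \<and> (s i > c j \<longrightarrow> x i j = 0))"

definition lp_optimal ::
  "'s set \<Rightarrow> 'v set \<Rightarrow> 'u set \<Rightarrow> ('s \<Rightarrow> real) \<Rightarrow> ('v \<Rightarrow> real) \<Rightarrow>
   ('u \<Rightarrow> 's) \<Rightarrow> ('u \<Rightarrow> 'v set) \<Rightarrow> ('u \<Rightarrow> real) \<Rightarrow> ('s \<Rightarrow> 'v \<Rightarrow> real) \<Rightarrow> ('u \<Rightarrow> real) \<Rightarrow> bool" where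
  "lp_optimal S V U s c svc T w x y \<longleftrightarrow>
     lp_feasible S V U s c svc T x y \<and>
     (\<forall>x' y'. lp_feasible S V U s c svc T x' y' \<longrightarrow>
        (\<Sum>k\<in>U. y' k * w k) \<le> (\<Sum>k\<in>U. y k * w k))"

fun Pcls :: "'s set \<Rightarrow> ('s \<Rightarrow> real) \<Rightarrow> ('v \<Rightarrow> real) \<Rightarrow> 'v \<Rightarrow> cls \<Rightarrow> 's set" where
  "Pcls S s c j Plus = {i\<in>S. c j / 2 < s i \<and> s i \<le> c j}"
| "Pcls S s c j Minus = {i\<in>S. c j / 4 < s i \<and> s i \<le> c j / 2}"
| "Pcls S s c j (Q q) =
     {i\<in>S. gamma_c ^ q * c j * beta_c < s i \<and> s i \<le> gamma_c ^ (q - 1) * c j * beta_c}"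

definition dcls :: "'s set \<Rightarrow> ('s \<Rightarrow> real) \<Rightarrow> ('v \<Rightarrow> real) \<Rightarrow> ('s \<Rightarrow> 'v \<Rightarrow> real) \<Rightarrow> 'v \<Rightarrow> cls \<Rightarrow> real" where
  "dcls S s c x j k = (\<Sum>i\<in>Pcls S s c j k. x i j)"

definition vnode :: "'s set \<Rightarrow> ('s \<Rightarrow> real) \<Rightarrow> ('v \<Rightarrow> real) \<Rightarrow> ('s \<Rightarrow> 'v \<Rightarrow> real) \<Rightarrow> 'v \<Rightarrow> real" where
  "vnode S s c x j = delta_c * c j / (\<Sum>i\<in>{i\<in>S. s i \<le> c j * beta_c}. s i * x i j)"

definition nslots :: "'s set \<Rightarrow> ('s \<Rightarrow> real) \<Rightarrow> ('v \<Rightarrow> real) \<Rightarrow> ('s \<Rightarrow> 'v \<Rightarrow> real) \<Rightarrow> 'v \<Rightarrow> nat \<Rightarrow> nat" where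
  "nslots S s c x j q = nat \<lceil>vnode S s c x j * dcls S s c x j (Q q)\<rceil>"

definition hnode :: "'s set \<Rightarrow> ('s \<Rightarrow> real) \<Rightarrow> ('v \<Rightarrow> real) \<Rightarrow> ('s \<Rightarrow> 'v \<Rightarrow> real) \<Rightarrow> 'v \<Rightarrow> real" where
  "hnode S s c x j = (let d = dcls S s c x j Minus in if d < 2 then d else d / 2)"

definition slots :: "'s set \<Rightarrow> 'v set \<Rightarrow> ('s \<Rightarrow> real) \<Rightarrow> ('v \<Rightarrow> real) \<Rightarrow> ('s \<Rightarrow> 'v \<Rightarrow> real) \<Rightarrow>
    ('v \<Rightarrow> nat) \<Rightarrow> ('v \<times> cls \<times> nat) set" where
  "slots S V s c x \<zeta> =
     {(j, Plus, 0) | j. j \<in> V \<and> \<zeta> j = 1} \<union>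
     {(j, Minus, k) | j k. j \<in> V \<and> \<zeta> j = 2 \<and> k < 2} \<union>
     {(j, Q q, k) | j q k. j \<in> V \<and> \<zeta> j = 3 \<and> 1 \<le> q \<and> k < nslots S s c x j q}"

definition Xset :: "('v \<times> cls \<times> nat) set \<Rightarrow> ('v \<times> cls \<times> nat \<Rightarrow> 's) \<Rightarrow> 's \<Rightarrow> 'v set" where
  "Xset Lam \<tau> i = {j. \<exists>\<sigma>\<in>Lam. fst \<sigma> = j \<and> \<tau> \<sigma> = i}"

definition zeta_pmf :: "'s set \<Rightarrow> ('s \<Rightarrow> real) \<Rightarrow> ('v \<Rightarrow> real) \<Rightarrow> ('s \<Rightarrow> 'v \<Rightarrow> real) \<Rightarrow> 'v \<Rightarrow> nat pmf" where
  "zeta_pmf S s c x j = embed_pmf (\<lambda>t.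
      if t = 1 then delta_c * dcls S s c x j Plus
      else if t = 2 then delta_c * hnode S s c x j
      else if t = 3 then 1 - delta_c * dcls S s c x j Plus - delta_c * hnode S s c x j
      else 0)"

definition slot_pmf :: "'s set \<Rightarrow> ('s \<Rightarrow> real) \<Rightarrow> ('v \<Rightarrow> real) \<Rightarrow> ('s \<Rightarrow> 'v \<Rightarrow> real) \<Rightarrow>
    'v \<times> cls \<times> nat \<Rightarrow> 's pmf" where
  "slot_pmf S s c x \<sigma> = (case \<sigma> of (j, k, _) \<Rightarrow>
      embed_pmf (\<lambda>i. if i \<in> Pcls S s c j k then x i j / dcls S s c x j k else 0))"

definition sa2_experiment :: "'s set \<Rightarrow> 'v set \<Rightarrow> ('s \<Rightarrow> real) \<Rightarrow> ('v \<Rightarrow> real) \<Rightarrow> ('s \<Rightarrow> 'v \<Rightarrow> real) \<Rightarrow>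
    's \<Rightarrow> (('v \<Rightarrow> nat) \<times> ('v \<times> cls \<times> nat \<Rightarrow> 's)) pmf" where
  "sa2_experiment S V s c x dflt =
     do { \<zeta> \<leftarrow> Pi_pmf V 0 (zeta_pmf S s c x);
          \<tau> \<leftarrow> Pi_pmf (slots S V s c x \<zeta>) dflt (slot_pmf S s c x);
          return_pmf (\<zeta>, \<tau>) }"

end

theory Submission
  imports Defs
begin

text \<open>Fix i and j with x i j > 0, so that i lies in exactly one size class of j. Conditioned on
  the value t of \<zeta> j that opens the N slots of this class on j, each of them independently
  receives i with probability x i j / d (d the x-mass of the class), so j hosts i with
  probability at least Pr(\<zeta> j = t) (1 - (1 - x i j / d)^N). For the class \<oplus> this is
  \<delta> x i j. For \<ominus> it is \<delta> h (1 - (1 - x i j / d)^2), and the two regimes in the definition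
  of h are exactly what keeps this above \<delta> (1 - e^-x). For a class q, the capacity constraint
  makes Pr(\<zeta> j = 3) at least 1/4 and at least the load fraction A of the small services, while
  there are at least d / (4 A) slots, so (1 - x/d)^N \<le> e^-x/(4A); concavity of t \<mapsto> 1 - e^-t
  concludes.\<close>

lemma one_minus_exp_neg_le: "1 - exp (- t) \<le> (t::real)"
  using exp_ge_add_one_self[of "- t"] by linarith

lemma one_minus_exp_neg_le_quadratic:
  fixes t :: real
  assumes "0 \<le> t" "t \<le> 2"
  shows "1 - exp (- t) \<le> t - t\<^sup>2 / 4"
proof -
  have "1 - t / 2 \<le> exp (- (t / 2))"
    using exp_ge_add_one_self[of "- (t / 2)"] by linarith
  then have "(1 - t / 2)\<^sup>2 \<le> (exp (- (t / 2)))\<^sup>2"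
    using assms by (intro power_mono) auto
  also have "(exp (- (t / 2)))\<^sup>2 = exp (- t)"
    by (simp add: power2_eq_square flip: exp_add)
  finally show ?thesis
    by (simp add: power2_eq_square field_simps)
qed

lemma mult_one_minus_exp_neg_le:
  fixes u t :: real
  assumes "0 \<le> u" "u \<le> 1"
  shows "u * (1 - exp (- t)) \<le> 1 - exp (- (u * t))"
proof -
  have "exp ((1 - u) *\<^sub>R 0 + u *\<^sub>R (- t)) \<le> (1 - u) * exp 0 + u * exp (- t)"
    using assms by (intro convex_onD[OF exp_convex]) auto
  then show ?thesis
    by (simp add: algebra_simps)
qed

lemma mult_one_minus_exp_neg_le_rescaled:
  fixes a v t p :: real
  assumes "0 \<le> t" "0 \<le> v" "0 \<le> a" "a \<le> p" "a \<le> p * v"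
  shows "a * (1 - exp (- t)) \<le> p * (1 - exp (- (v * t)))"
proof (cases "1 \<le> v")
  case True
  then have "exp (- (v * t)) \<le> exp (- t)"
    using mult_right_mono[of 1 v t] assms(1) by simp
  then show ?thesis
    using assms by (intro mult_mono) auto
next
  case False
  have "a * (1 - exp (- t)) \<le> p * v * (1 - exp (- t))"
    using assms by (intro mult_right_mono) auto
  also have "\<dots> \<le> p * (1 - exp (- (v * t)))"
    using mult_one_minus_exp_neg_le[of v t] False assms
    by (simp add: mult.assoc mult_left_mono)
  finally show ?thesis .
qed

lemma one_minus_pow_le_exp:
  fixes p :: real
  assumes "p \<le> 1"
  shows "(1 - p) ^ n \<le> exp (- (n * p))"
proof -
  have "(1 - p) ^ n \<le> exp (- p) ^ n"
    using assms exp_ge_add_one_self[of "- p"] by (intro power_mono) auto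
  then show ?thesis
    by (simp flip: exp_of_nat_mult)
qed

lemma one_minus_exp_neg_le_two_draws:
  fixes d t :: real
  assumes "0 < d" "0 \<le> t" "t \<le> d" "t \<le> 1"
  shows "1 - exp (- t) \<le> (if d < 2 then d else d / 2) * (1 - (1 - t / d)\<^sup>2)"
proof (cases "d < 2")
  case True
  have "t\<^sup>2 / d \<le> t"
    using assms by (simp add: power2_eq_square field_simps mult_right_mono)
  moreover have "(if d < 2 then d else d / 2) * (1 - (1 - t / d)\<^sup>2) = 2 * t - t\<^sup>2 / d"
    using True assms(1) by (simp add: power2_eq_square field_simps)
  ultimately show ?thesis
    using one_minus_exp_neg_le[of t] by linarith
next
  case False
  have "t\<^sup>2 / (2 * d) \<le> t\<^sup>2 / 4"
    using False by (intro divide_left_mono) auto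
  moreover have "(if d < 2 then d else d / 2) * (1 - (1 - t / d)\<^sup>2) = t - t\<^sup>2 / (2 * d)"
    using False assms(1) by (simp add: power2_eq_square field_simps)
  ultimately show ?thesis
    using one_minus_exp_neg_le_quadratic[of t] assms by linarith
qed

lemma prob_Pi_pmf_hits:
  assumes "finite A" "B \<subseteq> A"
  shows "measure_pmf.prob (Pi_pmf A dflt p) {\<tau>. \<exists>\<sigma>\<in>B. \<tau> \<sigma> = i}
    = 1 - (\<Prod>\<sigma>\<in>B. 1 - pmf (p \<sigma>) i)"
proof -
  let ?miss = "Pi A (\<lambda>\<sigma>. if \<sigma> \<in> B then - {i} else UNIV)"
  have "measure_pmf.prob (Pi_pmf A dflt p) ?miss
      = (\<Prod>\<sigma>\<in>A. measure_pmf.prob (p \<sigma>) (if \<sigma> \<in> B then - {i} else UNIV))"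
    using assms(1) by (rule measure_Pi_pmf_Pi)
  also have "\<dots> = (\<Prod>\<sigma>\<in>A. if \<sigma> \<in> B then 1 - pmf (p \<sigma>) i else 1)"
    by (intro prod.cong refl)
      (auto simp: Compl_eq_Diff_UNIV measure_pmf.prob_compl[where M = "_", simplified]
        measure_pmf_single)
  also have "\<dots> = (\<Prod>\<sigma>\<in>B. 1 - pmf (p \<sigma>) i)"
    using assms by (simp add: prod.If_cases Int_absorb1)
  finally have "measure_pmf.prob (Pi_pmf A dflt p) ?miss = (\<Prod>\<sigma>\<in>B. 1 - pmf (p \<sigma>) i)" .
  moreover have "{\<tau>. \<exists>\<sigma>\<in>B. \<tau> \<sigma> = i} = UNIV - ?miss"
    using assms by (auto simp: Pi_def)
  ultimately show ?thesis
    using measure_pmf.prob_compl[of ?miss "Pi_pmf A dflt p"] by simp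
qed

lemma prob_bind_Pi_pmf_ge:
  fixes Z :: "'v \<Rightarrow> 'a pmf" and M :: "('v \<Rightarrow> 'a) \<Rightarrow> 'b pmf"
  assumes "finite V" "j \<in> V" "0 \<le> K"
    and "\<And>\<zeta>. \<zeta> j = t \<Longrightarrow> K \<le> measure_pmf.prob (M \<zeta>) {\<tau>. P \<zeta> \<tau>}"
  shows "pmf (Z j) t * K
    \<le> measure_pmf.prob (do {\<zeta> \<leftarrow> Pi_pmf V z Z; \<tau> \<leftarrow> M \<zeta>; return_pmf (\<zeta>, \<tau>)})
        {(\<zeta>, \<tau>). P \<zeta> \<tau>}"
proof -
  let ?R = "do {\<zeta> \<leftarrow> Pi_pmf V z Z; \<tau> \<leftarrow> M \<zeta>; return_pmf (\<zeta>, \<tau>)}"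
  have "emeasure (Pi_pmf V z Z) {\<zeta>. \<zeta> j = t}
      = emeasure (map_pmf (\<lambda>\<zeta>. \<zeta> j) (Pi_pmf V z Z)) {t}"
    by (simp add: vimage_def)
  also have "\<dots> = pmf (Z j) t"
    using assms(1,2) by (simp add: Pi_pmf_component emeasure_pmf_single)
  finally have marginal: "emeasure (Pi_pmf V z Z) {\<zeta>. \<zeta> j = t} = pmf (Z j) t" .
  have "ennreal (pmf (Z j) t * K)
      = (\<integral>\<^sup>+\<zeta>. ennreal K * indicator {\<zeta>. \<zeta> j = t} \<zeta> \<partial>Pi_pmf V z Z)"
    using assms(3)
    by (simp add: nn_integral_cmult_indicator marginal ennreal_mult mult.commute)
  also have "\<dots> \<le> (\<integral>\<^sup>+\<zeta>. emeasure (M \<zeta>) {\<tau>. P \<zeta> \<tau>} \<partial>Pi_pmf V z Z)"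
    using assms(4)
    by (intro nn_integral_mono) (auto simp: indicator_def measure_pmf.emeasure_eq_measure)
  also have "\<dots> = emeasure ?R {(\<zeta>, \<tau>). P \<zeta> \<tau>}"
    by (simp add: bind_return_pmf map_pmf_def[symmetric] vimage_def)
  finally show ?thesis
    by (simp add: measure_pmf.emeasure_eq_measure)
qed

locale sa2_instance =
  fixes S :: "'s set" and V :: "'v set" and s :: "'s \<Rightarrow> real" and c :: "'v \<Rightarrow> real"
    and x :: "'s \<Rightarrow> 'v \<Rightarrow> real"
  assumes finite_S: "finite S" and finite_V: "finite V"
    and size_pos: "\<And>i. i \<in> S \<Longrightarrow> 0 < s i"
    and capacity_pos: "\<And>j. j \<in> V \<Longrightarrow> 0 < c j"
    and capacity: "\<And>j. j \<in> V \<Longrightarrow> (\<Sum>i\<in>S. x i j * s i) \<le> c j"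
    and x_nonneg: "\<And>i j. i \<in> S \<Longrightarrow> j \<in> V \<Longrightarrow> 0 \<le> x i j"
    and x_le_1: "\<And>i j. i \<in> S \<Longrightarrow> j \<in> V \<Longrightarrow> x i j \<le> 1"
    and x_eq_0_if_too_large: "\<And>i j. i \<in> S \<Longrightarrow> j \<in> V \<Longrightarrow> c j < s i \<Longrightarrow> x i j = 0"
begin

abbreviation P :: "'v \<Rightarrow> cls \<Rightarrow> 's set" where "P \<equiv> Pcls S s c"
abbreviation d :: "'v \<Rightarrow> cls \<Rightarrow> real" where "d \<equiv> dcls S s c x"
abbreviation h :: "'v \<Rightarrow> real" where "h \<equiv> hnode S s c x"
abbreviation n :: "'v \<Rightarrow> nat \<Rightarrow> nat" where "n \<equiv> nslots S s c x"
abbreviation \<Lambda> :: "('v \<Rightarrow> nat) \<Rightarrow> ('v \<times> cls \<times> nat) set" where "\<Lambda> \<equiv> slots S V s c x"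
abbreviation zeta_dist :: "'v \<Rightarrow> nat pmf" where "zeta_dist \<equiv> zeta_pmf S s c x"
abbreviation slot_dist :: "'v \<times> cls \<times> nat \<Rightarrow> 's pmf" where "slot_dist \<equiv> slot_pmf S s c x"

abbreviation small_load :: "'v \<Rightarrow> real" where
  "small_load j \<equiv> \<Sum>i\<in>{i\<in>S. s i \<le> c j * beta_c}. s i * x i j"

abbreviation prob_hosted :: "'s \<Rightarrow> 's \<Rightarrow> 'v \<Rightarrow> real" where
  "prob_hosted dflt i j \<equiv> measure_pmf.prob (sa2_experiment S V s c x dflt)
     {(\<zeta>, \<tau>). j \<in> Xset (\<Lambda> \<zeta>) \<tau> i}"

lemma Pcls_subset: "P j k \<subseteq> S"
  by (cases k) auto

lemma finite_Pcls: "finite (P j k)"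
  using finite_S Pcls_subset by (rule finite_subset[rotated])

lemma x_nonneg_Pcls: "j \<in> V \<Longrightarrow> i \<in> P j k \<Longrightarrow> 0 \<le> x i j"
  using Pcls_subset x_nonneg by blast

lemma dcls_nonneg: "j \<in> V \<Longrightarrow> 0 \<le> d j k"
  unfolding dcls_def using x_nonneg_Pcls by (intro sum_nonneg)

lemma x_le_dcls: "j \<in> V \<Longrightarrow> i \<in> P j k \<Longrightarrow> x i j \<le> d j k"
  unfolding dcls_def using x_nonneg_Pcls finite_Pcls by (intro member_le_sum) blast+

lemma load_fractions_le_1:
  assumes j: "j \<in> V"
  shows "d j Plus / 2 + d j Minus / 4 + small_load j / c j \<le> 1"
proof -
  have load_ge: "a * d j k \<le> (\<Sum>i\<in>P j k. s i * x i j)" if "\<And>i. i \<in> P j k \<Longrightarrow> a \<le> s i" for a k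
    unfolding dcls_def sum_distrib_left
    using that x_nonneg_Pcls[OF j] by (intro sum_mono mult_right_mono) blast+
  have "c j / 2 * d j Plus \<le> (\<Sum>i\<in>P j Plus. s i * x i j)"
    by (rule load_ge) auto
  moreover have "c j / 4 * d j Minus \<le> (\<Sum>i\<in>P j Minus. s i * x i j)"
    by (rule load_ge) auto
  moreover have "(\<Sum>i\<in>P j Plus. s i * x i j) + (\<Sum>i\<in>P j Minus. s i * x i j) + small_load j
      = (\<Sum>i\<in>P j Plus \<union> P j Minus \<union> {i\<in>S. s i \<le> c j * beta_c}. s i * x i j)"
  proof -
    have "P j Plus \<inter> P j Minus = {}" "(P j Plus \<union> P j Minus) \<inter> {i\<in>S. s i \<le> c j * beta_c} = {}"
      by (auto simp: beta_c_def)
    then show ?thesis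
      using finite_Pcls finite_S by (simp add: sum.union_disjoint)
  qed
  moreover have "\<dots> \<le> (\<Sum>i\<in>S. s i * x i j)"
    using finite_S Pcls_subset size_pos x_nonneg[OF _ j]
    by (intro sum_mono2) (auto simp: less_imp_le)
  moreover have "(\<Sum>i\<in>S. s i * x i j) \<le> c j"
    using capacity[OF j] by (simp add: mult.commute)
  ultimately have "c j * (d j Plus / 2 + d j Minus / 4 + small_load j / c j) \<le> c j * 1"
    using capacity_pos[OF j] by (simp add: algebra_simps)
  then show ?thesis
    using capacity_pos[OF j] by simp
qed

lemma hnode_bounds:
  assumes j: "j \<in> V"
  shows "0 \<le> h j" "h j \<le> d j Minus" "d j Plus + h j \<le> 3"
proof -
  have "0 \<le> small_load j / c j"
    using size_pos x_nonneg[OF _ j] capacity_pos[OF j]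
    by (intro divide_nonneg_pos sum_nonneg) (auto simp: less_imp_le)
  then have "d j Plus / 2 + d j Minus / 4 \<le> 1"
    using load_fractions_le_1[OF j] by linarith
  then show "0 \<le> h j" "h j \<le> d j Minus" "d j Plus + h j \<le> 3"
    using dcls_nonneg[OF j, of Plus] dcls_nonneg[OF j, of Minus]
    by (auto simp: hnode_def Let_def)
qed

lemma pmf_zeta_dist:
  assumes j: "j \<in> V"
  shows "pmf (zeta_dist j) t =
    (if t = 1 then delta_c * d j Plus
     else if t = 2 then delta_c * h j
     else if t = 3 then 1 - delta_c * d j Plus - delta_c * h j
     else 0)"
  (is "_ = ?p t")
proof -
  have nonneg: "0 \<le> ?p t" for t
    using hnode_bounds[OF j] dcls_nonneg[OF j, of Plus] by (auto simp: delta_c_def)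
  have "(\<integral>\<^sup>+t. ennreal (?p t) \<partial>count_space UNIV) = (\<Sum>t\<in>{1, 2, 3}. ennreal (?p t))"
    by (rule nn_integral_count_space') auto
  also have "\<dots> = ennreal (\<Sum>t\<in>{1, 2, 3}. ?p t)"
    using nonneg by (intro sum_ennreal) auto
  finally have "(\<integral>\<^sup>+t. ennreal (?p t) \<partial>count_space UNIV) = 1"
    by simp
  then show ?thesis
    unfolding zeta_pmf_def using nonneg by (subst pmf_embed_pmf) auto
qed

lemma pmf_zeta_dist_3_ge:
  assumes j: "j \<in> V"
  shows "1 / 4 \<le> pmf (zeta_dist j) 3" "small_load j / c j \<le> pmf (zeta_dist j) 3"
  using hnode_bounds[OF j] load_fractions_le_1[OF j] dcls_nonneg[OF j, of Plus]
  by (simp_all add: pmf_zeta_dist[OF j] delta_c_def)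

lemma pmf_slot_dist:
  assumes "j \<in> V" "0 < d j k"
  shows "pmf (slot_dist (j, k, m)) i = (if i \<in> P j k then x i j / d j k else 0)"
    (is "_ = ?p i")
proof -
  have nonneg: "0 \<le> ?p i" for i
    using assms x_nonneg_Pcls by (auto intro!: divide_nonneg_pos)
  have "(\<integral>\<^sup>+i. ennreal (?p i) \<partial>count_space UNIV) = (\<Sum>i\<in>P j k. ennreal (?p i))"
    by (rule nn_integral_count_space') (auto simp: finite_Pcls)
  also have "\<dots> = ennreal (\<Sum>i\<in>P j k. ?p i)"
    using nonneg by (intro sum_ennreal) blast
  also have "(\<Sum>i\<in>P j k. ?p i) = 1"
    using assms(2) by (simp add: dcls_def flip: sum_divide_distrib)
  finally show ?thesis
    unfolding slot_pmf_def prod.case using nonneg by (intro pmf_embed_pmf) auto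
qed

lemma Pcls_Q_unique:
  assumes "j \<in> V" "i \<in> P j (Q q1)" "i \<in> P j (Q q2)"
  shows "q1 = q2"
proof -
  have "0 \<le> c j * beta_c"
    using capacity_pos[OF assms(1)] by (simp add: beta_c_def)
  have False if "a < b" "i \<in> P j (Q a)" "i \<in> P j (Q b)" for a b
  proof -
    have "gamma_c ^ (b - 1) \<le> gamma_c ^ a"
      using that(1) by (intro power_decreasing) (auto simp: gamma_c_def)
    then have "gamma_c ^ (b - 1) * (c j * beta_c) \<le> gamma_c ^ a * (c j * beta_c)"
      using \<open>0 \<le> c j * beta_c\<close> by (rule mult_right_mono)
    then show False
      using that(2,3) by (auto simp: mult.assoc)
  qed
  then show ?thesis
    using assms by (metis linorder_neqE_nat)
qed

lemma finite_slots: "finite (\<Lambda> \<zeta>)"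
proof -
  have finite_Q_classes: "finite {q. P j (Q q) \<noteq> {}}" if j: "j \<in> V" for j
  proof -
    have "finite {q. i \<in> P j (Q q)}" for i
    proof (cases "\<exists>q. i \<in> P j (Q q)")
      case True
      then obtain q0 where "i \<in> P j (Q q0)" by blast
      with Pcls_Q_unique[OF j] have "{q. i \<in> P j (Q q)} \<subseteq> {q0}" by blast
      then show ?thesis by (rule finite_subset) simp
    qed (simp del: Pcls.simps)
    moreover have "{q. P j (Q q) \<noteq> {}} = (\<Union>i\<in>S. {q. i \<in> P j (Q q)})"
      using Pcls_subset by blast
    ultimately show ?thesis
      using finite_S by (simp del: Pcls.simps)
  qed
  have Q_slots_nonempty: "P j (Q q) \<noteq> {}" if "0 < n j q" for j q
  proof
    assume "P j (Q q) = {}"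
    then have "d j (Q q) = 0"
      unfolding dcls_def by (simp only: sum.empty)
    with that show False
      by (simp add: nslots_def)
  qed
  let ?Plus_Minus = "(\<lambda>j. (j, Plus, 0)) ` V \<union> (\<lambda>(j, m). (j, Minus, m)) ` (V \<times> {..<2::nat})"
  let ?Qs = "\<Union>j\<in>V. \<Union>q\<in>{q. P j (Q q) \<noteq> {}}. (\<lambda>m. (j, Q q, m)) ` {..<n j q}"
  have "\<Lambda> \<zeta> \<subseteq> ?Plus_Minus \<union> ?Qs"
  proof
    fix \<sigma>
    assume "\<sigma> \<in> \<Lambda> \<zeta>"
    then consider (plus) j where "\<sigma> = (j, Plus, 0)" "j \<in> V"
      | (minus) j m where "\<sigma> = (j, Minus, m)" "j \<in> V" "m < 2"
      | (q) j q m where "\<sigma> = (j, Q q, m)" "j \<in> V" "m < n j q"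
      unfolding slots_def by blast
    then show "\<sigma> \<in> ?Plus_Minus \<union> ?Qs"
    proof cases
      case q
      then have "P j (Q q) \<noteq> {}"
        by (intro Q_slots_nonempty) simp
      with q show ?thesis by blast
    qed force+
  qed
  moreover have "finite ?Plus_Minus"
    using finite_V by simp
  moreover have "finite ?Qs"
    using finite_V finite_Q_classes by simp
  ultimately show ?thesis
    by (meson finite_Un finite_subset)
qed

lemma prob_hosted_ge:
  assumes j: "j \<in> V" and i: "i \<in> P j k" and x: "0 < x i j"
    and slots_open: "\<And>\<zeta>. \<zeta> j = t \<Longrightarrow> (\<lambda>m. (j, k, m)) ` {..<N} \<subseteq> \<Lambda> \<zeta>"
  shows "pmf (zeta_dist j) t * (1 - (1 - x i j / d j k) ^ N) \<le> prob_hosted dflt i j"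
proof -
  let ?B = "(\<lambda>m. (j, k, m)) ` {..<N}"
  have d: "0 < d j k"
    using x_le_dcls[OF j i] x by linarith
  have miss: "(\<Prod>\<sigma>\<in>?B. 1 - pmf (slot_dist \<sigma>) i) = (1 - x i j / d j k) ^ N"
    by (subst prod.reindex) (auto simp: inj_on_def pmf_slot_dist[OF j d] i)
  have "0 \<le> 1 - (1 - x i j / d j k) ^ N"
    using x_le_dcls[OF j i] x d by (auto intro!: power_le_one)
  then show ?thesis
    unfolding sa2_experiment_def
  proof (rule prob_bind_Pi_pmf_ge[OF finite_V j])
    fix \<zeta> :: "'v \<Rightarrow> nat"
    assume "\<zeta> j = t"
    then have B: "?B \<subseteq> \<Lambda> \<zeta>"
      by (rule slots_open)
    have "1 - (1 - x i j / d j k) ^ N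
        = measure_pmf.prob (Pi_pmf (\<Lambda> \<zeta>) dflt slot_dist) {\<tau>. \<exists>\<sigma>\<in>?B. \<tau> \<sigma> = i}"
      by (simp only: prob_Pi_pmf_hits[OF finite_slots B] miss)
    also have "\<dots> \<le> measure_pmf.prob (Pi_pmf (\<Lambda> \<zeta>) dflt slot_dist) {\<tau>. j \<in> Xset (\<Lambda> \<zeta>) \<tau> i}"
    proof (rule measure_pmf.finite_measure_mono)
      show "{\<tau>. \<exists>\<sigma>\<in>?B. \<tau> \<sigma> = i} \<subseteq> {\<tau>. j \<in> Xset (\<Lambda> \<zeta>) \<tau> i}"
      proof safe
        fix \<tau> m
        assume "m < N"
        then have "(j, k, m) \<in> \<Lambda> \<zeta>"
          using B by blast
        then show "j \<in> Xset (\<Lambda> \<zeta>) \<tau> (\<tau> (j, k, m))"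
          unfolding Xset_def by force
      qed
    qed simp
    finally show "1 - (1 - x i j / d j k) ^ N
        \<le> measure_pmf.prob (Pi_pmf (\<Lambda> \<zeta>) dflt slot_dist) {\<tau>. j \<in> Xset (\<Lambda> \<zeta>) \<tau> i}" .
  qed
qed

lemma service_class_cases:
  assumes i: "i \<in> S" and j: "j \<in> V" and fits: "s i \<le> c j"
  obtains "i \<in> P j Plus" | "i \<in> P j Minus" | q where "1 \<le> q" "i \<in> P j (Q q)"
proof (cases "c j / 4 < s i")
  case True
  then show ?thesis
    using that i fits by (cases "c j / 2 < s i") auto
next
  case False
  let ?below = "\<lambda>q. gamma_c ^ q * c j * beta_c < s i"
  have "0 < s i / (c j * beta_c)"
    using size_pos[OF i] capacity_pos[OF j] by (simp add: beta_c_def)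
  then obtain m where "(1 / 2) ^ m < s i / (c j * beta_c)"
    using real_arch_pow_inv[of "s i / (c j * beta_c)" "1 / 2"] by auto
  then have "?below m"
    using capacity_pos[OF j] by (simp add: gamma_c_def beta_c_def field_simps)
  define q where "q = (LEAST q. ?below q)"
  have "?below q"
    unfolding q_def by (rule LeastI) fact
  moreover have "q \<noteq> 0"
  proof
    assume "q = 0"
    with \<open>?below q\<close> False show False
      by (simp add: beta_c_def)
  qed
  moreover have "\<not> ?below (q - 1)"
    unfolding q_def by (rule not_less_Least) (use \<open>q \<noteq> 0\<close> q_def in auto)
  ultimately show ?thesis
    using that(3)[of q] i by auto
qed

lemma prob_hosted_Plus:
  assumes j: "j \<in> V" and i: "i \<in> P j Plus" and x: "0 < x i j"
  shows "delta_c * (1 - exp (- x i j)) \<le> prob_hosted dflt i j"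
proof -
  have "delta_c * (1 - exp (- x i j)) \<le> delta_c * x i j"
    using one_minus_exp_neg_le[of "x i j"] by (simp add: delta_c_def)
  also have "\<dots> = pmf (zeta_dist j) 1 * (1 - (1 - x i j / d j Plus) ^ 1)"
    using x_le_dcls[OF j i] x by (simp add: pmf_zeta_dist[OF j])
  also have "\<dots> \<le> prob_hosted dflt i j"
    using j by (intro prob_hosted_ge[OF j i x]) (auto simp: slots_def)
  finally show ?thesis .
qed

lemma prob_hosted_Minus:
  assumes j: "j \<in> V" and i: "i \<in> P j Minus" and x: "0 < x i j"
  shows "delta_c * (1 - exp (- x i j)) \<le> prob_hosted dflt i j"
proof -
  have "1 - exp (- x i j) \<le> h j * (1 - (1 - x i j / d j Minus) ^ 2)"
    unfolding hnode_def Let_def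
    using x_le_dcls[OF j i] x x_le_1[OF _ j] Pcls_subset i
    by (intro one_minus_exp_neg_le_two_draws) auto
  also have "delta_c * (h j * (1 - (1 - x i j / d j Minus) ^ 2))
      = pmf (zeta_dist j) 2 * (1 - (1 - x i j / d j Minus) ^ 2)"
    by (simp add: pmf_zeta_dist[OF j])
  also have "\<dots> \<le> prob_hosted dflt i j"
    using j by (intro prob_hosted_ge[OF j i x]) (auto simp: slots_def)
  finally show ?thesis
    by (simp add: delta_c_def)
qed

lemma prob_hosted_Q:
  assumes j: "j \<in> V" and i: "i \<in> P j (Q q)" and "1 \<le> q" and x: "0 < x i j"
  shows "delta_c * (1 - exp (- x i j)) \<le> prob_hosted dflt i j"
proof -
  define A where "A = small_load j / c j"
  have iS: "i \<in> S"
    using i Pcls_subset by blast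
  have "gamma_c ^ (q - 1) * (c j * beta_c) \<le> 1 * (c j * beta_c)"
    using capacity_pos[OF j] by (intro mult_right_mono) (auto simp: gamma_c_def beta_c_def power_le_one)
  then have "s i \<le> c j * beta_c"
    using i by (auto simp: mult.assoc)
  then have "s i * x i j \<le> small_load j"
    using iS finite_S size_pos x_nonneg[OF _ j] by (intro member_le_sum) (auto simp: less_imp_le)
  moreover have "0 < s i * x i j"
    using size_pos[OF iS] x by simp
  ultimately have "0 < A"
    unfolding A_def using capacity_pos[OF j] by simp
  have d: "0 < d j (Q q)"
    using x_le_dcls[OF j i] x by linarith
  have "vnode S s c x j * d j (Q q) \<le> n j q"
    unfolding nslots_def by (rule of_nat_ceiling)
  moreover have "vnode S s c x j = 1 / (4 * A)"
    unfolding vnode_def A_def delta_c_def using capacity_pos[OF j] by simp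
  ultimately have "d j (Q q) / (4 * A) * (x i j / d j (Q q)) \<le> n j q * (x i j / d j (Q q))"
    using d x by (intro mult_right_mono) auto
  then have enough_slots: "x i j / (4 * A) \<le> n j q * (x i j / d j (Q q))"
    using d by simp
  have "delta_c * (1 - exp (- x i j)) \<le> pmf (zeta_dist j) 3 * (1 - exp (- (1 / (4 * A) * x i j)))"
    using pmf_zeta_dist_3_ge[OF j] \<open>0 < A\<close> x unfolding A_def[symmetric] delta_c_def
    by (intro mult_one_minus_exp_neg_le_rescaled) (auto simp: field_simps)
  also have "\<dots> \<le> pmf (zeta_dist j) 3 * (1 - exp (- (n j q * (x i j / d j (Q q)))))"
    using enough_slots by (intro mult_left_mono) auto
  also have "\<dots> \<le> pmf (zeta_dist j) 3 * (1 - (1 - x i j / d j (Q q)) ^ n j q)"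
    using one_minus_pow_le_exp[of "x i j / d j (Q q)" "n j q"] x_le_dcls[OF j i] d
    by (intro mult_left_mono) auto
  also have "\<dots> \<le> prob_hosted dflt i j"
    using j \<open>1 \<le> q\<close> by (intro prob_hosted_ge[OF j i x]) (auto simp: slots_def)
  finally show ?thesis .
qed

end

theorem theorem17:
  fixes S :: "'s set" and V :: "'v set" and U :: "'u set"
    and s :: "'s \<Rightarrow> real" and c :: "'v \<Rightarrow> real"
    and svc :: "'u \<Rightarrow> 's" and T :: "'u \<Rightarrow> 'v set" and w :: "'u \<Rightarrow> real"
    and x :: "'s \<Rightarrow> 'v \<Rightarrow> real" and y :: "'u \<Rightarrow> real" and dflt :: 's
  assumes "finite S" and "finite V" and "finite U"
    and "\<forall>i\<in>S. s i > 0" and "\<forall>j\<in>V. c j > 0"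
    and "\<forall>k\<in>U. svc k \<in> S \<and> T k \<subseteq> V \<and> w k > 0"
    and "lp_optimal S V U s c svc T w x y"
  shows "\<forall>i\<in>S. \<forall>j\<in>V.
    measure_pmf.prob (sa2_experiment S V s c x dflt)
        {(\<zeta>, \<tau>). j \<in> Xset (slots S V s c x \<zeta>) \<tau> i}
      \<ge> delta_c * (1 - exp (- x i j))"
proof (intro ballI)
  fix i j
  assume i: "i \<in> S" and j: "j \<in> V"
  interpret sa2_instance S V s c x
    using assms by unfold_locales (auto simp: lp_optimal_def lp_feasible_def)
  show "delta_c * (1 - exp (- x i j)) \<le> prob_hosted dflt i j"
  proof (cases "x i j = 0")
    case False
    then have x: "0 < x i j" and fits: "s i \<le> c j"
      using x_nonneg[OF i j] x_eq_0_if_too_large[OF i j] by force+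
    show ?thesis
      by (rule service_class_cases[OF i j fits])
        (blast intro: prob_hosted_Plus[OF j _ x] prob_hosted_Minus[OF j _ x] prob_hosted_Q[OF j _ _ x])+
  qed simp
qed

end
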